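(* Let $\alpha,\beta\in\mathbb{R}$ and $\eta\in\{1,-1\}$, and let $G_4$ be the connected, simply connected Lie group whose Lie algebra $\mathfrak{g}_4$ has a basis $\{e_1,e_2,e_3\}$ with $[e_1,e_2]=-e_2+(2\eta-\beta)e_3$, $[e_1,e_3]=-\beta e_2+e_3$, $[e_2,e_3]=\alpha e_1$, equipped with the left-invariant Lorentzian metric $g$ for which $\{e_1,e_2,e_3\}$ is pseudo-orthonormal with $e_3$ timelike, and with the product structure $J$. Then $(G_4,g,J)$ is not an algebraic Schouten soliton associated to the Kobayashi–Nomizu connection $\nabla^1$: for no real numbers $\lambda_0,c$ does there exist a derivation $D$ of $\mathfrak{g}_4$ with $\widetilde{\mathrm{Ric}}^1=(s^1\lambda_0+c)\mathrm{Id}+D$.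
   Context: Pseudo-orthonormal means $g(e_1,e_1)=g(e_2,e_2)=1$, $g(e_3,e_3)=-1$, $g(e_i,e_j)=0$ for $i\neq j$; left-invariant tensors are identified with their values on $\mathfrak{g}$. $\nabla$ is the Levi-Civita connection of $g$. The product structure $J$ is the left-invariant endomorphism with $Je_1=e_1$, $Je_2=e_2$, $Je_3=-e_3$. The canonical connection is $\nabla^0_XY=\nabla_XY-\frac12(\nabla_XJ)JY$, and the Kobayashi–Nomizu connection is $\nabla^1_XY=\nabla^0_XY-\frac14[(\nabla_YJ)JX-(\nabla_{JY}J)X]$. For $k=0,1$: $R^k(X,Y)Z=\nabla^k_X\nabla^k_YZ-\nabla^k_Y\nabla^k_XZ-\nabla^k_{[X,Y]}Z$; $\rho^k(X,Y)=-g(R^k(X,e_1)Y,e_1)-g(R^k(X,e_2)Y,e_2)+g(R^k(X,e_3)Y,e_3)$; $\widetilde\rho^k(X,Y)=\frac12(\rho^k(X,Y)+\rho^k(Y,X))$; $\widetilde{\mathrm{Ric}}^k$ is defined by $\widetilde\rho^k(X,Y)=g(\widetilde{\mathrm{Ric}}^k(X),Y)$; and $s^k=\widetilde\rho^k(e_1,e_1)+\widetilde\rho^k(e_2,e_2)-\widetilde\rho^k(e_3,e_3)$. A derivation of $\mathfrak{g}$ is a linear map $D$ with $D[X,Y]=[DX,Y]+[X,DY]$. $(G,g,J)$ is an algebraic Schouten soliton associated to $\nabla^k$ (with real constants $\lambda_0,c$) if $\widetilde{\mathrm{Ric}}^k=(s^k\lambda_0+c)\mathrm{Id}+D$ for some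 derivation $D$. *)

theory Defs
  imports "HOL-Analysis.Analysis"
begin

text \<open>Three-dimensional real Lie algebras with a fixed basis e1, e2, e3, modelled
on real^3; e i is the i-th standard basis vector (indices (1::3), (2::3), (3::3)).  All tensors are left-invariant
and identified with their values on the Lie algebra.\<close>

definition e :: "3 \<Rightarrow> real^3" where
  "e i = axis i 1"

definition eps :: "3 \<Rightarrow> real" where
  "eps i = (if i = 3 then -1 else 1)"

definition gmet :: "real^3 \<Rightarrow> real^3 \<Rightarrow> real" where
  "gmet X Y = (\<Sum>i\<in>UNIV. eps i * X$i * Y$i)"

text \<open>Levi-Civita connection of a left-invariant metric via the Koszul formula
  2 g(LC X Y, Z) = g([X,Y],Z) - g([Y,Z],X) + g([Z,X],Y),
  solved using the pseudo-orthonormal basis.\<close>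
definition LC :: "(real^3 \<Rightarrow> real^3 \<Rightarrow> real^3) \<Rightarrow> real^3 \<Rightarrow> real^3 \<Rightarrow> real^3" where
  "LC br X Y = (\<Sum>k\<in>UNIV. (eps k * (1/2) *
      (gmet (br X Y) (e k) - gmet (br Y (e k)) X + gmet (br (e k) X) Y)) *\<^sub>R e k)"

definition Jps :: "real^3 \<Rightarrow> real^3" where
  "Jps X = (\<chi> i. if i = 3 then - (X$i) else X$i)"

definition nablaJ :: "(real^3 \<Rightarrow> real^3 \<Rightarrow> real^3) \<Rightarrow> real^3 \<Rightarrow> real^3 \<Rightarrow> real^3" where
  "nablaJ br X Y = LC br X (Jps Y) - Jps (LC br X Y)"

definition conn0 :: "(real^3 \<Rightarrow> real^3 \<Rightarrow> real^3) \<Rightarrow> real^3 \<Rightarrow> real^3 \<Rightarrow> real^3" where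
  "conn0 br X Y = LC br X Y - (1/2) *\<^sub>R nablaJ br X (Jps Y)"

definition conn1 :: "(real^3 \<Rightarrow> real^3 \<Rightarrow> real^3) \<Rightarrow> real^3 \<Rightarrow> real^3 \<Rightarrow> real^3" where
  "conn1 br X Y = conn0 br X Y
      - (1/4) *\<^sub>R (nablaJ br Y (Jps X) - nablaJ br (Jps Y) X)"

definition curv :: "(real^3 \<Rightarrow> real^3 \<Rightarrow> real^3) \<Rightarrow> (real^3 \<Rightarrow> real^3 \<Rightarrow> real^3)
    \<Rightarrow> real^3 \<Rightarrow> real^3 \<Rightarrow> real^3 \<Rightarrow> real^3" where
  "curv br nb X Y Z = nb X (nb Y Z) - nb Y (nb X Z) - nb (br X Y) Z"

definition ricci :: "(real^3 \<Rightarrow> real^3 \<Rightarrow> real^3) \<Rightarrow> (real^3 \<Rightarrow> real^3 \<Rightarrow> real^3)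
    \<Rightarrow> real^3 \<Rightarrow> real^3 \<Rightarrow> real" where
  "ricci br nb X Y = - gmet (curv br nb X (e 1) Y) (e 1) - gmet (curv br nb X (e 2) Y) (e 2)
      + gmet (curv br nb X (e 3) Y) (e 3)"

definition sym_ricci :: "(real^3 \<Rightarrow> real^3 \<Rightarrow> real^3) \<Rightarrow> (real^3 \<Rightarrow> real^3 \<Rightarrow> real^3)
    \<Rightarrow> real^3 \<Rightarrow> real^3 \<Rightarrow> real" where
  "sym_ricci br nb X Y = (1/2) * (ricci br nb X Y + ricci br nb Y X)"

text \<open>Ricci operator: g(RicOp X, Y) = sym_ricci(X,Y), solved in the pseudo-orthonormal basis\<close>
definition ric_op :: "(real^3 \<Rightarrow> real^3 \<Rightarrow> real^3) \<Rightarrow> (real^3 \<Rightarrow> real^3 \<Rightarrow> real^3)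
    \<Rightarrow> real^3 \<Rightarrow> real^3" where
  "ric_op br nb X = (\<Sum>k\<in>UNIV. (eps k * sym_ricci br nb X (e k)) *\<^sub>R e k)"

definition scal :: "(real^3 \<Rightarrow> real^3 \<Rightarrow> real^3) \<Rightarrow> (real^3 \<Rightarrow> real^3 \<Rightarrow> real^3) \<Rightarrow> real" where
  "scal br nb = sym_ricci br nb (e 1) (e 1) + sym_ricci br nb (e 2) (e 2)
      - sym_ricci br nb (e 3) (e 3)"

definition is_derivation :: "(real^3 \<Rightarrow> real^3 \<Rightarrow> real^3) \<Rightarrow> (real^3 \<Rightarrow> real^3) \<Rightarrow> bool" where
  "is_derivation br D \<longleftrightarrow> linear D \<and> (\<forall>X Y. D (br X Y) = br (D X) Y + br X (D Y))"

definition algebraic_schouten_soliton ::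
  "(real^3 \<Rightarrow> real^3 \<Rightarrow> real^3) \<Rightarrow> (real^3 \<Rightarrow> real^3 \<Rightarrow> real^3) \<Rightarrow> real \<Rightarrow> real \<Rightarrow> bool" where
  "algebraic_schouten_soliton br nb lam0 c \<longleftrightarrow>
     (\<exists>D. is_derivation br D \<and>
          (\<forall>X. ric_op br nb X = (scal br nb * lam0 + c) *\<^sub>R X + D X))"

definition bracket_of :: "(3 \<Rightarrow> 3 \<Rightarrow> real^3) \<Rightarrow> real^3 \<Rightarrow> real^3 \<Rightarrow> real^3" where
  "bracket_of b X Y = (\<Sum>i\<in>UNIV. \<Sum>j\<in>UNIV. (X$i * Y$j) *\<^sub>R b i j)"

definition g4_basis :: "real \<Rightarrow> real \<Rightarrow> real \<Rightarrow> 3 \<Rightarrow> 3 \<Rightarrow> real^3" where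
  "g4_basis alpha beta eta i j =
     (if i = 1 \<and> j = 2 then - e 2 + (2*eta - beta) *\<^sub>R e 3
      else if i = 2 \<and> j = 1 then e 2 - (2*eta - beta) *\<^sub>R e 3
      else if i = 1 \<and> j = 3 then - beta *\<^sub>R e 2 + e 3
      else if i = 3 \<and> j = 1 then beta *\<^sub>R e 2 - e 3
      else if i = 2 \<and> j = 3 then alpha *\<^sub>R e 1
      else if i = 3 \<and> j = 2 then - alpha *\<^sub>R e 1
      else 0)"

definition g4_bracket :: "real \<Rightarrow> real \<Rightarrow> real \<Rightarrow> real^3 \<Rightarrow> real^3 \<Rightarrow> real^3" where
  "g4_bracket alpha beta eta = bracket_of (g4_basis alpha beta eta)"

end

theory Submission
  imports Defs
begin

(* A soliton would make
   Ric - k Id a derivation for k = s lambda0 + c.  The derivation identity on the three brackets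
   of basis vectors yields polynomial equations in alpha, beta, eta, k; eliminating k and
   normalising eta to 1 (replace alpha, beta by eta alpha, eta beta) leaves a system without real
   solutions: alpha = 0 forces beta = 0, which is inconsistent, and otherwise
   alpha = 1 - 2 t^2 with t = beta - 1, whence 2 t^3 = 1 and alpha = 1, i.e. t = 0. *)

lemma e_nth: "e i $ j = (if j = i then 1 else 0)"
  by (simp add: e_def axis_def)

lemma gmet_eq: "gmet X Y = X$1 * Y$1 + X$2 * Y$2 - X$3 * Y$3"
  by (simp add: gmet_def sum_3 eps_def)

lemma Jps_nth: "Jps X $ 1 = X$1" "Jps X $ 2 = X$2" "Jps X $ 3 = - X$3"
  by (simp_all add: Jps_def)

lemma g4_bracket_nth:
  "g4_bracket \<alpha> \<beta> \<eta> X Y $ 1 = \<alpha> * (X$2 * Y$3 - X$3 * Y$2)"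
  "g4_bracket \<alpha> \<beta> \<eta> X Y $ 2 = - (X$1 * Y$2 - X$2 * Y$1) - \<beta> * (X$1 * Y$3 - X$3 * Y$1)"
  "g4_bracket \<alpha> \<beta> \<eta> X Y $ 3 = (2*\<eta> - \<beta>) * (X$1 * Y$2 - X$2 * Y$1) + (X$1 * Y$3 - X$3 * Y$1)"
  by (simp_all add: g4_bracket_def bracket_of_def g4_basis_def sum_3 e_nth algebra_simps)

lemma LC_g4_nth:
  "LC (g4_bracket \<alpha> \<beta> \<eta>) X Y $ 1 =
     - X$3 * Y$3 - X$2 * Y$2 - (\<eta> + \<alpha>/2) * X$3 * Y$2 - (\<eta> - \<alpha>/2) * X$2 * Y$3"
  "LC (g4_bracket \<alpha> \<beta> \<eta>) X Y $ 2 =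
     X$2 * Y$1 + (\<eta> + \<alpha>/2) * X$3 * Y$1 + (\<eta> - \<beta> + \<alpha>/2) * X$1 * Y$3"
  "LC (g4_bracket \<alpha> \<beta> \<eta>) X Y $ 3 =
     - X$3 * Y$1 - (\<eta> - \<alpha>/2) * X$2 * Y$1 + (\<eta> - \<beta> + \<alpha>/2) * X$1 * Y$2"
  by (simp_all add: LC_def sum_3 e_nth gmet_eq g4_bracket_nth eps_def algebra_simps)

lemma nablaJ_g4_nth:
  "nablaJ (g4_bracket \<alpha> \<beta> \<eta>) X Y $ 1 = 2 * X$3 * Y$3 + (2*\<eta> - \<alpha>) * X$2 * Y$3"
  "nablaJ (g4_bracket \<alpha> \<beta> \<eta>) X Y $ 2 = - (2*\<eta> - 2*\<beta> + \<alpha>) * X$1 * Y$3"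
  "nablaJ (g4_bracket \<alpha> \<beta> \<eta>) X Y $ 3 =
     - 2 * X$3 * Y$1 - (2*\<eta> - \<alpha>) * X$2 * Y$1 + (2*\<eta> - 2*\<beta> + \<alpha>) * X$1 * Y$2"
  by (simp_all add: nablaJ_def LC_g4_nth Jps_nth algebra_simps)

lemma conn1_g4_nth:
  "conn1 (g4_bracket \<alpha> \<beta> \<eta>) X Y $ 1 = - X$2 * Y$2 - \<alpha> * X$3 * Y$2"
  "conn1 (g4_bracket \<alpha> \<beta> \<eta>) X Y $ 2 = X$2 * Y$1 + \<beta> * X$3 * Y$1"
  "conn1 (g4_bracket \<alpha> \<beta> \<eta>) X Y $ 3 = X$1 * Y$3"
  by (simp_all add: conn1_def conn0_def nablaJ_g4_nth LC_g4_nth Jps_nth algebra_simps)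

lemma ric_op_conn1_g4_nth:
  "ric_op (g4_bracket \<alpha> \<beta> \<eta>) (conn1 (g4_bracket \<alpha> \<beta> \<eta>)) X $ 1
     = (-1 + 2*\<beta>*\<eta> - \<beta>\<^sup>2) * X$1"
  "ric_op (g4_bracket \<alpha> \<beta> \<eta>) (conn1 (g4_bracket \<alpha> \<beta> \<eta>)) X $ 2
     = (-1 + 2*\<alpha>*\<eta> - \<alpha>*\<beta>) * X$2 + \<alpha>/2 * X$3"
  "ric_op (g4_bracket \<alpha> \<beta> \<eta>) (conn1 (g4_bracket \<alpha> \<beta> \<eta>)) X $ 3
     = - \<alpha>/2 * X$2"
  by (simp_all add: ric_op_def sum_3 sym_ricci_def ricci_def curv_def gmet_eq conn1_g4_nth
      g4_bracket_nth e_nth eps_def algebra_simps power2_eq_square)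

lemma algebraic_schouten_soliton_imp_derivation:
  assumes "algebraic_schouten_soliton br nb lam0 c"
  shows "is_derivation br (\<lambda>X. ric_op br nb X - (scal br nb * lam0 + c) *\<^sub>R X)"
proof -
  obtain D where der: "is_derivation br D"
    and ric: "\<And>X. ric_op br nb X = (scal br nb * lam0 + c) *\<^sub>R X + D X"
    using assms unfolding algebraic_schouten_soliton_def by blast
  have "D = (\<lambda>X. ric_op br nb X - (scal br nb * lam0 + c) *\<^sub>R X)"
    by (simp add: ric)
  with der show ?thesis
    by simp
qed

lemma g4_shifted_ricci_derivation_conditions:
  fixes \<alpha> \<beta> \<eta> k :: real
  defines "br \<equiv> g4_bracket \<alpha> \<beta> \<eta>"
  assumes "is_derivation br (\<lambda>X. ric_op br (conn1 br) X - k *\<^sub>R X)"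
  shows "\<alpha> = (2*\<eta> - \<beta>) * (\<alpha>*\<eta> - 1)"
    and "\<alpha> = \<beta> * (3*\<alpha>*\<eta> - 2*\<alpha>*\<beta> - 1)"
    and "\<alpha> * (-1 + 4*\<beta>*\<eta> - 2*\<beta>\<^sup>2 - \<alpha>*\<eta>) = 0"
proof -
  define D where "D X = ric_op br (conn1 br) X - k *\<^sub>R X" for X
  have der: "D (br X Y) $ i = (br (D X) Y + br X (D Y)) $ i" for X Y i
    using assms(2) unfolding is_derivation_def D_def by simp
  note nth = D_def br_def ric_op_conn1_g4_nth g4_bracket_nth e_nth
  have k: "k = -1 + 2*\<beta>*\<eta> - \<beta>\<^sup>2 + \<alpha>*\<eta> - \<alpha>*\<beta>"
    using der[of "e 1" "e 2" 2] by (simp add: nth) (simp add: field_simps)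
  show "\<alpha> = (2*\<eta> - \<beta>) * (\<alpha>*\<eta> - 1)"
    using der[of "e 1" "e 2" 3] k by (simp add: nth) (simp add: algebra_simps power2_eq_square)
  show "\<alpha> = \<beta> * (3*\<alpha>*\<eta> - 2*\<alpha>*\<beta> - 1)"
    using der[of "e 1" "e 3" 2] k by (simp add: nth) (simp add: algebra_simps power2_eq_square)
  show "\<alpha> * (-1 + 4*\<beta>*\<eta> - 2*\<beta>\<^sup>2 - \<alpha>*\<eta>) = 0"
    using der[of "e 2" "e 3" 1] k
    by (simp add: nth del: mult_eq_0_iff) algebra
qed

lemma g4_derivation_system_unsolvable:
  fixes a b :: real
  assumes B: "a = (2 - b) * (a - 1)"
    and C: "a = b * (3*a - 2*a*b - 1)"
    and E: "a * (-1 + 4*b - 2*b\<^sup>2 - a) = 0"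
  shows False
proof (cases "a = 0")
  case True
  then have "b = 0"
    using C by simp
  then show False
    using B True by simp
next
  case False
  define t where "t = b - 1"
  have a: "a = 1 - 2*t\<^sup>2"
    using E False unfolding t_def by algebra
  have t: "2*t^3 = 1"
    using B a unfolding t_def by algebra
  have "a = 1"
    using C a t unfolding t_def by algebra
  then show False
    using a t by simp
qed

theorem theorem4p9:
  fixes alpha beta eta :: real
  assumes "eta = 1 \<or> eta = -1"
  shows "\<not> (\<exists>lam0 c. algebraic_schouten_soliton (g4_bracket alpha beta eta)
                 (conn1 (g4_bracket alpha beta eta)) lam0 c)"
proof
  assume "\<exists>lam0 c. algebraic_schouten_soliton (g4_bracket alpha beta eta)
                 (conn1 (g4_bracket alpha beta eta)) lam0 c"
  then obtain k where
    "is_derivation (g4_bracket alpha beta eta)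
       (\<lambda>X. ric_op (g4_bracket alpha beta eta) (conn1 (g4_bracket alpha beta eta)) X - k *\<^sub>R X)"
    using algebraic_schouten_soliton_imp_derivation by blast
  note conds = g4_shifted_ricci_derivation_conditions[OF this]
  have eta_sq: "eta * eta = 1"
    using assms by auto
  show False
  proof (rule g4_derivation_system_unsolvable)
    show "eta * alpha = (2 - eta * beta) * (eta * alpha - 1)"
      using conds(1) eta_sq by algebra
    show "eta * alpha = eta * beta * (3 * (eta * alpha) - 2 * (eta * alpha) * (eta * beta) - 1)"
      using conds(2) eta_sq by algebra
    show "eta * alpha * (-1 + 4 * (eta * beta) - 2 * (eta * beta)\<^sup>2 - eta * alpha) = 0"
      using conds(3) eta_sq by algebra
  qed
qed

end
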